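(* Let $d_1,d_2,d_3\ge2$, $A\in\mathbb{R}^{d_1\times d_2}_{>0}$ and $B\in\mathbb{R}^{d_2\times d_3}_{>0}$ (all entries strictly positive). Then \[ R(AB)\le \Phi\bigl(R(A),R(B)\bigr). \]
   Context: For a matrix $A=(a_{ik})\in\mathbb{R}^{d_1\times d_2}$ with strictly positive entries, its distortion is $R(A)=\max_{1\le i,j\le d_1,\ 1\le k,\ell\le d_2}\frac{a_{ik}a_{j\ell}}{a_{i\ell}a_{jk}}$ (so $R(A)\ge1$). The envelope function is $\Phi(\alpha,\beta)=\left(\frac{1+\sqrt{\alpha\beta}}{\sqrt{\alpha}+\sqrt{\beta}}\right)^2$ for $\alpha,\beta\ge1$. *)

theory Defs
  imports "HOL-Analysis.Analysis"
begin

text \<open>Matrices A in R^(d1 x d2) are represented as real^'d2^'d1 (rows indexed by 'd1,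
  columns by 'd2); A $ i $ k is the entry a_ik.\<close>

definition pos_matrix :: "real^'n^'m \<Rightarrow> bool" where
  "pos_matrix A \<longleftrightarrow> (\<forall>i k. A $ i $ k > 0)"

definition distortion :: "real^'n^'m \<Rightarrow> real" where
  "distortion A = Max {(A $ i $ k * A $ j $ l) / (A $ i $ l * A $ j $ k) | i j k l. True}"

definition envelope :: "real \<Rightarrow> real \<Rightarrow> real" where
  "envelope \<alpha> \<beta> = ((1 + sqrt (\<alpha> * \<beta>)) / (sqrt \<alpha> + sqrt \<beta>))^2"

end

theory Submission
  imports Defs
begin

text \<open>For rows i, j of A and columns k, l of B put w m = a_im b_mk, f m = a_jm / a_im and
  g m = b_ml / b_mk. The cross ratio of AB at (i, j, k, l) is then
  (\<Sum>w)(\<Sum>wfg) / ((\<Sum>wf)(\<Sum>wg)), and by definition of the distortion f and g vary by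
  factors at most \<alpha> = R(A) and \<beta> = R(B). After rescaling f and g to take values in [1, \<alpha>]
  and [1, \<beta>], the pointwise inequalities (f - 1)(\<beta> - g) \<ge> 0 and (g - 1)(\<alpha> - f) \<ge> 0
  bound (\<Sum>w)(\<Sum>wfg) - (\<Sum>wf)(\<Sum>wg) by two products of averages, and an AM-GM estimate
  shows that the smaller of the two is at most (\<Phi>(\<alpha>, \<beta>) - 1)(\<Sum>wf)(\<Sum>wg).\<close>

lemma envelope_minus_one:
  fixes \<alpha> \<beta> :: real
  assumes "\<alpha> \<ge> 1" "\<beta> \<ge> 1"
  shows "envelope \<alpha> \<beta> - 1 = (\<alpha> - 1) * (\<beta> - 1) / (sqrt \<alpha> + sqrt \<beta>)^2"
proof -
  define s t where "s = sqrt \<alpha>" and "t = sqrt \<beta>"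
  have "s + t > 0" using assms by (simp add: s_def t_def add_pos_pos)
  then have "((1 + s * t) / (s + t))^2 - 1 = ((1 + s * t)^2 - (s + t)^2) / (s + t)^2"
    by (simp add: power_divide diff_divide_distrib)
  also have "(1 + s * t)^2 - (s + t)^2 = (s^2 - 1) * (t^2 - 1)"
    by (simp add: power2_eq_square algebra_simps)
  finally show ?thesis
    using assms by (simp add: envelope_def real_sqrt_mult s_def t_def)
qed

lemma min_cross_products_le:
  fixes \<alpha> \<beta> a b c d :: real
  assumes "\<alpha> \<ge> 1" "\<beta> \<ge> 1" "a \<ge> 0" "b \<ge> 0" "c \<ge> 0" "d \<ge> 0"
    and a_b: "a + \<alpha> * b = \<alpha> - 1" and c_d: "c + \<beta> * d = \<beta> - 1"
  shows "min (b * c) (a * d) * (sqrt \<alpha> + sqrt \<beta>)^2 \<le> (\<alpha> - 1) * (\<beta> - 1)"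
proof (cases "a * b = 0")
  case True
  then have "min (b * c) (a * d) = 0" using assms(3-6) by auto
  then show ?thesis using assms(1,2) by simp
next
  case False
  then have ab_pos: "a * b > 0" using assms(3,4) by (simp add: less_le)
  define m where "m = min (b * c) (a * d)"
  define s t where "s = sqrt \<alpha>" and "t = sqrt \<beta>"
  have \<alpha>\<beta>: "\<alpha> = s^2" "\<beta> = t^2" using assms(1,2) by (simp_all add: s_def t_def)
  have "m \<ge> 0" using assms(3-6) by (simp add: m_def)
  have amgm: "2 * (s * t) * (a * b) \<le> a^2 + \<alpha> * \<beta> * b^2"
    using sum_power2_ge_zero [of "a - s * t * b" 0]
    by (simp add: \<alpha>\<beta> power2_eq_square algebra_simps)
  have "a * m + \<beta> * (b * m) \<le> a * (b * c) + \<beta> * (b * (a * d))"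
    using assms(2-4) by (intro add_mono mult_left_mono) (auto simp: m_def)
  also have "\<dots> = a * b * (\<beta> - 1)" using c_d by (simp add: algebra_simps flip: c_d)
  finally have "(m * (a + \<beta> * b)) * (a + \<alpha> * b) \<le> (a * b * (\<beta> - 1)) * (a + \<alpha> * b)"
    using assms(1,3,4) by (intro mult_right_mono) (simp_all add: algebra_simps)
  then have "m * (a + \<beta> * b) * (a + \<alpha> * b) \<le> a * b * (\<beta> - 1) * (\<alpha> - 1)"
    by (simp only: a_b)
  moreover have "m * (a * b * (s + t)^2) \<le> m * (a + \<beta> * b) * (a + \<alpha> * b)"
    using mult_left_mono [OF amgm \<open>m \<ge> 0\<close>]
    by (simp add: \<alpha>\<beta> power2_eq_square algebra_simps)
  ultimately have "a * b * (m * (s + t)^2) \<le> a * b * ((\<alpha> - 1) * (\<beta> - 1))"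
    by (simp add: algebra_simps)
  then show ?thesis using ab_pos unfolding m_def s_def t_def by (rule mult_left_le_imp_le)
qed

lemma product_le_envelope:
  fixes \<alpha> \<beta> W P Q T :: real
  assumes "W > 0" "W \<le> P" "P \<le> \<alpha> * W" "W \<le> Q" "Q \<le> \<beta> * W"
    and T_P: "T \<le> \<beta> * P + Q - \<beta> * W" and T_Q: "T \<le> P + \<alpha> * Q - \<alpha> * W"
  shows "W * T \<le> envelope \<alpha> \<beta> * P * Q"
proof -
  have "\<alpha> \<ge> 1" "\<beta> \<ge> 1"
    using order_trans [OF assms(2,3)] order_trans [OF assms(4,5)] assms(1)
    by (simp_all add: mult_le_cancel_right1)
  have "P > 0" "Q > 0" using assms(1,2,4) by simp_all
  \<comment> \<open>chosen so that \<open>b c P Q\<close> and \<open>a d P Q\<close> are the two bounds for \<open>W T - P Q\<close> below\<close>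
  define a b c d where "a = (\<alpha> * W - P) / P" and "b = (P - W) / P"
    and "c = (\<beta> * W - Q) / Q" and "d = (Q - W) / Q"
  have "min (b * c) (a * d) * (sqrt \<alpha> + sqrt \<beta>)^2 \<le> (\<alpha> - 1) * (\<beta> - 1)"
    using \<open>\<alpha> \<ge> 1\<close> \<open>\<beta> \<ge> 1\<close> \<open>P > 0\<close> \<open>Q > 0\<close> assms(2-5)
    by (intro min_cross_products_le) (simp_all add: a_def b_def c_def d_def field_simps)
  moreover have "(sqrt \<alpha> + sqrt \<beta>)^2 > 0"
    using \<open>\<alpha> \<ge> 1\<close> \<open>\<beta> \<ge> 1\<close> by (intro zero_less_power add_pos_pos) simp_all
  ultimately have min_le: "min (b * c) (a * d) \<le> envelope \<alpha> \<beta> - 1"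
    using \<open>\<alpha> \<ge> 1\<close> \<open>\<beta> \<ge> 1\<close> by (simp add: envelope_minus_one le_divide_eq)
  have "W * T - P * Q \<le> (P - W) * (\<beta> * W - Q)"
    using mult_left_mono [OF T_P, of W] assms(1) by (simp add: algebra_simps)
  moreover have "W * T - P * Q \<le> (\<alpha> * W - P) * (Q - W)"
    using mult_left_mono [OF T_Q, of W] assms(1) by (simp add: algebra_simps)
  moreover have "b * c * (P * Q) = (P - W) * (\<beta> * W - Q)"
    and "a * d * (P * Q) = (\<alpha> * W - P) * (Q - W)"
    using \<open>P > 0\<close> \<open>Q > 0\<close> by (simp_all add: a_def b_def c_def d_def)
  ultimately have "W * T - P * Q \<le> min (b * c) (a * d) * (P * Q)"
    using \<open>P > 0\<close> \<open>Q > 0\<close> by (simp add: min_mult_distrib_right)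
  also have "\<dots> \<le> (envelope \<alpha> \<beta> - 1) * (P * Q)"
    using min_le \<open>P > 0\<close> \<open>Q > 0\<close> by (simp add: mult_right_mono)
  finally show ?thesis by (simp add: algebra_simps)
qed

lemma weighted_sum_product_le_envelope:
  fixes w f g :: "'i \<Rightarrow> real"
  assumes "finite I" "I \<noteq> {}"
    and w_pos: "\<And>m. m \<in> I \<Longrightarrow> w m > 0"
    and f_pos: "\<And>m. m \<in> I \<Longrightarrow> f m > 0" and g_pos: "\<And>m. m \<in> I \<Longrightarrow> g m > 0"
    and f_spread: "\<And>m n. m \<in> I \<Longrightarrow> n \<in> I \<Longrightarrow> f m \<le> \<alpha> * f n"
    and g_spread: "\<And>m n. m \<in> I \<Longrightarrow> n \<in> I \<Longrightarrow> g m \<le> \<beta> * g n"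
  shows "(\<Sum>m\<in>I. w m) * (\<Sum>m\<in>I. w m * f m * g m)
    \<le> envelope \<alpha> \<beta> * (\<Sum>m\<in>I. w m * f m) * (\<Sum>m\<in>I. w m * g m)"
proof -
  define \<rho> \<sigma> where "\<rho> = Min (f ` I)" and "\<sigma> = Min (g ` I)"
  have "\<rho> \<in> f ` I" "\<sigma> \<in> g ` I" using assms(1,2) by (simp_all add: \<rho>_def \<sigma>_def)
  then obtain p q where "p \<in> I" "q \<in> I" "\<rho> = f p" "\<sigma> = g q" by blast
  have f_ge: "\<rho> \<le> f m" and g_ge: "\<sigma> \<le> g m" if "m \<in> I" for m
    using that assms(1) by (simp_all add: \<rho>_def \<sigma>_def)
  have f_le: "f m \<le> \<alpha> * \<rho>" and g_le: "g m \<le> \<beta> * \<sigma>" if "m \<in> I" for m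
    using that f_spread g_spread \<open>p \<in> I\<close> \<open>q \<in> I\<close> \<open>\<rho> = f p\<close> \<open>\<sigma> = g q\<close> by simp_all
  have "\<rho> > 0" "\<sigma> > 0" using f_pos g_pos \<open>p \<in> I\<close> \<open>q \<in> I\<close> \<open>\<rho> = f p\<close> \<open>\<sigma> = g q\<close> by simp_all
  define W P Q T where "W = (\<Sum>m\<in>I. w m)" and "P = (\<Sum>m\<in>I. w m * f m)"
    and "Q = (\<Sum>m\<in>I. w m * g m)" and "T = (\<Sum>m\<in>I. w m * f m * g m)"
  have "W > 0" unfolding W_def using assms(1,2) w_pos by (simp add: sum_pos)
  have "\<rho> * \<sigma> * W \<le> \<sigma> * P" "\<sigma> * P \<le> \<alpha> * (\<rho> * \<sigma> * W)"
    "\<rho> * \<sigma> * W \<le> \<rho> * Q" "\<rho> * Q \<le> \<beta> * (\<rho> * \<sigma> * W)"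
    unfolding W_def P_def Q_def sum_distrib_left
    using w_pos f_ge f_le g_ge g_le \<open>\<rho> > 0\<close> \<open>\<sigma> > 0\<close>
    by (auto intro!: sum_mono simp: mult.left_commute mult_left_mono)
  moreover have "0 \<le> (\<Sum>m\<in>I. w m * (f m - \<rho>) * (\<beta> * \<sigma> - g m))"
    "0 \<le> (\<Sum>m\<in>I. w m * (g m - \<sigma>) * (\<alpha> * \<rho> - f m))"
    using w_pos [THEN less_imp_le] f_ge f_le g_ge g_le
    by (auto intro!: sum_nonneg mult_nonneg_nonneg)
  then have "T \<le> \<beta> * (\<sigma> * P) + \<rho> * Q - \<beta> * (\<rho> * \<sigma> * W)"
    "T \<le> \<sigma> * P + \<alpha> * (\<rho> * Q) - \<alpha> * (\<rho> * \<sigma> * W)"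
    unfolding W_def P_def Q_def T_def
    by (simp_all add: algebra_simps sum.distrib sum_subtractf sum_distrib_left)
  ultimately have "(\<rho> * \<sigma>) * (W * T) \<le> (\<rho> * \<sigma>) * (envelope \<alpha> \<beta> * P * Q)"
    using product_le_envelope [of "\<rho> * \<sigma> * W" "\<sigma> * P" \<alpha> "\<rho> * Q" \<beta> T]
      \<open>W > 0\<close> \<open>\<rho> > 0\<close> \<open>\<sigma> > 0\<close> by (simp add: algebra_simps)
  then show ?thesis
    using \<open>\<rho> > 0\<close> \<open>\<sigma> > 0\<close> by (simp add: W_def P_def Q_def T_def)
qed

lemma finite_cross_ratios:
  fixes A :: "real^'n^'m"
  shows "finite {(A $ i $ k * A $ j $ l) / (A $ i $ l * A $ j $ k) | i j k l. True}"
proof (rule finite_subset)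
  show "{(A $ i $ k * A $ j $ l) / (A $ i $ l * A $ j $ k) | i j k l. True}
      \<subseteq> (\<lambda>(i, j, k, l). A $ i $ k * A $ j $ l / (A $ i $ l * A $ j $ k)) ` UNIV"
    by (auto simp: image_def)
qed simp

lemma cross_ratio_le_distortion:
  fixes A :: "real^'n^'m"
  shows "A $ i $ k * A $ j $ l / (A $ i $ l * A $ j $ k) \<le> distortion A"
  unfolding distortion_def by (rule Max_ge [OF finite_cross_ratios]) blast

lemma distortion_attained:
  fixes A :: "real^'n^'m"
  obtains i j k l where "distortion A = A $ i $ k * A $ j $ l / (A $ i $ l * A $ j $ k)"
proof -
  have "distortion A \<in> {(A $ i $ k * A $ j $ l) / (A $ i $ l * A $ j $ k) | i j k l. True}"
    unfolding distortion_def by (rule Max_in [OF finite_cross_ratios]) blast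
  then show ?thesis using that by blast
qed

lemma matrix_mult_cross_ratio_le_envelope:
  fixes A :: "real^'n^'m" and B :: "real^'p^'n"
  assumes A_pos: "pos_matrix A" and B_pos: "pos_matrix B"
  shows "(A ** B) $ i $ k * (A ** B) $ j $ l / ((A ** B) $ i $ l * (A ** B) $ j $ k)
    \<le> envelope (distortion A) (distortion B)"
proof -
  define w f g where "w m = A $ i $ m * B $ m $ k" and "f m = A $ j $ m / A $ i $ m"
    and "g m = B $ m $ l / B $ m $ k" for m
  have pos: "A $ r $ m > 0" "B $ m $ c > 0" for r m c
    using A_pos B_pos by (simp_all add: pos_matrix_def)
  then have nonzero: "A $ r $ m \<noteq> 0" "B $ m $ c \<noteq> 0" for r m c
    by (metis less_irrefl)+
  have f_spread: "f m \<le> distortion A * f n" for m n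
  proof -
    have "f m = A $ j $ m * A $ i $ n / (A $ j $ n * A $ i $ m) * f n"
      using nonzero by (simp add: f_def field_simps)
    also have "\<dots> \<le> distortion A * f n"
      using pos by (intro mult_right_mono cross_ratio_le_distortion) (simp add: f_def less_imp_le)
    finally show ?thesis .
  qed
  have g_spread: "g m \<le> distortion B * g n" for m n
  proof -
    have "g m = B $ m $ l * B $ n $ k / (B $ m $ k * B $ n $ l) * g n"
      using nonzero by (simp add: g_def field_simps)
    also have "\<dots> \<le> distortion B * g n"
      using pos by (intro mult_right_mono cross_ratio_le_distortion) (simp add: g_def less_imp_le)
    finally show ?thesis .
  qed
  have entries: "(A ** B) $ i $ k = (\<Sum>m\<in>UNIV. w m)"
    "(A ** B) $ j $ l = (\<Sum>m\<in>UNIV. w m * f m * g m)"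
    "(A ** B) $ j $ k = (\<Sum>m\<in>UNIV. w m * f m)"
    "(A ** B) $ i $ l = (\<Sum>m\<in>UNIV. w m * g m)"
    using nonzero by (simp_all add: matrix_matrix_mult_def w_def f_def g_def mult.commute)
  have "(A ** B) $ i $ l * (A ** B) $ j $ k > 0"
    using pos by (simp add: matrix_matrix_mult_def sum_pos)
  moreover have "(A ** B) $ i $ k * (A ** B) $ j $ l
      \<le> envelope (distortion A) (distortion B) * (A ** B) $ j $ k * (A ** B) $ i $ l"
    unfolding entries using pos f_spread g_spread
    by (intro weighted_sum_product_le_envelope) (simp_all add: w_def f_def g_def)
  ultimately show ?thesis by (simp add: pos_divide_le_eq ac_simps)
qed

theorem mainTheorem9:
  fixes A :: "real^'d2^'d1" and B :: "real^'d3^'d2"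
  assumes "CARD('d1) \<ge> 2" and "CARD('d2) \<ge> 2" and "CARD('d3) \<ge> 2"
    and "pos_matrix A" and "pos_matrix B"
  shows "distortion (A ** B) \<le> envelope (distortion A) (distortion B)"
proof -
  obtain i j k l where "distortion (A ** B)
      = (A ** B) $ i $ k * (A ** B) $ j $ l / ((A ** B) $ i $ l * (A ** B) $ j $ k)"
    by (rule distortion_attained)
  then show ?thesis using matrix_mult_cross_ratio_le_envelope [OF assms(4,5)] by simp
qed

end
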